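(* Let $S$ be a multiplicatively closed subset of $R$ and $M$ an $R$-module. Consider: (a) $S^{-1}M$ satisfies the dual of Property $\mathcal{A}$ as an $R$-module; (b) $S^{-1}M$ satisfies the dual of Property $\mathcal{A}$ as an $S^{-1}R$-module; (c) $M$ satisfies the dual of Property $\mathcal{A}$ as an $R$-module. Then (a) and (b) are equivalent. If moreover $S\cap W_R(M)=\emptyset$ and $S\cap Z_R(M)=\emptyset$, then (a), (b), (c) are all equivalent.
   Context: All rings are commutative with identity. For an $R$-module $M$, $W_R(M)=\{r\in R : rM\neq M\}$ and $Z_R(M)=\{r\in R: rm=0 \text{ for some } 0\neq m\in M\}$. An $R$-module $M$ satisfies the dual of Property $\mathcal{A}$ if for every finitely generated ideal $I$ of $R$ with $I\subseteq W_R(M)$ we have $IM\neq M$. *)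

theory Defs
  imports "HOL-Algebra.Algebra"
begin

text \<open>Rings: commutative rings with identity (HOL-Algebra cring).
  Modules: HOL-Algebra module records \<open>('a,'b) module\<close> (multiplication/one fields unused).\<close>

definition mult_closed :: "('a, 'c) ring_scheme \<Rightarrow> 'a set \<Rightarrow> bool" where
  "mult_closed R S \<longleftrightarrow> S \<subseteq> carrier R \<and> \<one>\<^bsub>R\<^esub> \<in> S \<and>
     (\<forall>s\<in>S. \<forall>t\<in>S. s \<otimes>\<^bsub>R\<^esub> t \<in> S)"

definition W_set :: "('a, 'c) ring_scheme \<Rightarrow> ('a, 'b, 'd) module_scheme \<Rightarrow> 'a set" where
  "W_set R M = {r \<in> carrier R. (\<lambda>m. r \<odot>\<^bsub>M\<^esub> m) ` carrier M \<noteq> carrier M}"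

definition Z_set :: "('a, 'c) ring_scheme \<Rightarrow> ('a, 'b, 'd) module_scheme \<Rightarrow> 'a set" where
  "Z_set R M = {r \<in> carrier R. \<exists>m\<in>carrier M. m \<noteq> \<zero>\<^bsub>M\<^esub> \<and> r \<odot>\<^bsub>M\<^esub> m = \<zero>\<^bsub>M\<^esub>}"

definition ideal_smult :: "('a, 'b, 'd) module_scheme \<Rightarrow> 'a set \<Rightarrow> 'b set" where
  "ideal_smult M I = generate (add_monoid M) {a \<odot>\<^bsub>M\<^esub> m | a m. a \<in> I \<and> m \<in> carrier M}"

definition fg_ideal :: "('a, 'c) ring_scheme \<Rightarrow> 'a set \<Rightarrow> bool" where
  "fg_ideal R I \<longleftrightarrow> (\<exists>A. finite A \<and> A \<subseteq> carrier R \<and> I = Idl\<^bsub>R\<^esub> A)"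

definition dual_prop_A :: "('a, 'c) ring_scheme \<Rightarrow> ('a, 'b, 'd) module_scheme \<Rightarrow> bool" where
  "dual_prop_A R M \<longleftrightarrow>
     (\<forall>I. fg_ideal R I \<and> I \<subseteq> W_set R M \<longrightarrow> ideal_smult M I \<noteq> carrier M)"

definition loc_rel :: "('a, 'c) ring_scheme \<Rightarrow> ('a, 'b, 'd) module_scheme \<Rightarrow> 'a set
    \<Rightarrow> (('b \<times> 'a) \<times> ('b \<times> 'a)) set" where
  "loc_rel R M S = {((m, s), (m', s')). m \<in> carrier M \<and> s \<in> S \<and> m' \<in> carrier M \<and> s' \<in> S \<and>
      (\<exists>u\<in>S. u \<odot>\<^bsub>M\<^esub> ((s' \<odot>\<^bsub>M\<^esub> m) \<ominus>\<^bsub>M\<^esub> (s \<odot>\<^bsub>M\<^esub> m')) = \<zero>\<^bsub>M\<^esub>)}"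

definition ring_loc_rel :: "('a, 'c) ring_scheme \<Rightarrow> 'a set \<Rightarrow> (('a \<times> 'a) \<times> ('a \<times> 'a)) set" where
  "ring_loc_rel R S = {((a, s), (a', s')). a \<in> carrier R \<and> s \<in> S \<and> a' \<in> carrier R \<and> s' \<in> S \<and>
      (\<exists>u\<in>S. u \<otimes>\<^bsub>R\<^esub> ((s' \<otimes>\<^bsub>R\<^esub> a) \<ominus>\<^bsub>R\<^esub> (s \<otimes>\<^bsub>R\<^esub> a')) = \<zero>\<^bsub>R\<^esub>)}"

definition loc_ring :: "('a, 'c) ring_scheme \<Rightarrow> 'a set \<Rightarrow> ('a \<times> 'a) set ring" where
  "loc_ring R S = (let E = ring_loc_rel R S in
    \<lparr> carrier = (carrier R \<times> S) // E,
      Group.monoid.mult = (\<lambda>P Q. \<Union>{E `` {(a \<otimes>\<^bsub>R\<^esub> a', s \<otimes>\<^bsub>R\<^esub> s')} | a s a' s'. (a, s) \<in> P \<and> (a', s') \<in> Q}),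
      Group.monoid.one = E `` {(\<one>\<^bsub>R\<^esub>, \<one>\<^bsub>R\<^esub>)},
      Ring.ring.zero = E `` {(\<zero>\<^bsub>R\<^esub>, \<one>\<^bsub>R\<^esub>)},
      Ring.ring.add = (\<lambda>P Q. \<Union>{E `` {((s' \<otimes>\<^bsub>R\<^esub> a) \<oplus>\<^bsub>R\<^esub> (s \<otimes>\<^bsub>R\<^esub> a'), s \<otimes>\<^bsub>R\<^esub> s')} | a s a' s'. (a, s) \<in> P \<and> (a', s') \<in> Q}) \<rparr>)"

text \<open>S^{-1}M as an R-module: r (m/s) = (r m)/s.\<close>
definition loc_module :: "('a, 'c) ring_scheme \<Rightarrow> ('a, 'b, 'd) module_scheme \<Rightarrow> 'a set
    \<Rightarrow> ('a, ('b \<times> 'a) set) module" where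
  "loc_module R M S = (let E = loc_rel R M S in
    \<lparr> carrier = (carrier M \<times> S) // E,
      Group.monoid.mult = undefined,
      Group.monoid.one = undefined,
      Ring.ring.zero = E `` {(\<zero>\<^bsub>M\<^esub>, \<one>\<^bsub>R\<^esub>)},
      Ring.ring.add = (\<lambda>P Q. \<Union>{E `` {((s' \<odot>\<^bsub>M\<^esub> m) \<oplus>\<^bsub>M\<^esub> (s \<odot>\<^bsub>M\<^esub> m'), s \<otimes>\<^bsub>R\<^esub> s')} | m s m' s'. (m, s) \<in> P \<and> (m', s') \<in> Q}),
      Module.module.smult = (\<lambda>r P. \<Union>{E `` {(r \<odot>\<^bsub>M\<^esub> m, s)} | m s. (m, s) \<in> P}) \<rparr>)"

text \<open>S^{-1}M as an S^{-1}R-module: (a/t)(m/s) = (a m)/(t s).\<close>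
definition loc_module_loc :: "('a, 'c) ring_scheme \<Rightarrow> ('a, 'b, 'd) module_scheme \<Rightarrow> 'a set
    \<Rightarrow> (('a \<times> 'a) set, ('b \<times> 'a) set) module" where
  "loc_module_loc R M S = (let E = loc_rel R M S in
    \<lparr> carrier = (carrier M \<times> S) // E,
      Group.monoid.mult = undefined,
      Group.monoid.one = undefined,
      Ring.ring.zero = E `` {(\<zero>\<^bsub>M\<^esub>, \<one>\<^bsub>R\<^esub>)},
      Ring.ring.add = (\<lambda>P Q. \<Union>{E `` {((s' \<odot>\<^bsub>M\<^esub> m) \<oplus>\<^bsub>M\<^esub> (s \<odot>\<^bsub>M\<^esub> m'), s \<otimes>\<^bsub>R\<^esub> s')} | m s m' s'. (m, s) \<in> P \<and> (m', s') \<in> Q}),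
      Module.module.smult = (\<lambda>A P. \<Union>{E `` {(a \<odot>\<^bsub>M\<^esub> m, t \<otimes>\<^bsub>R\<^esub> s)} | a t m s. (a, t) \<in> A \<and> (m, s) \<in> P}) \<rparr>)"

end

theory Submission
  imports Defs
begin

text \<open>The module S^-1 M has the same additive structure over R and over S^-1 R, and a
  fraction a/t acts on it with the same image as a, because t acts invertibly on fractions.
  Clearing the denominators of a finite generating set shows that every finitely generated
  ideal of S^-1 R is the extension S^-1 I of a finitely generated ideal I of R; moreover
  S^-1 I lies in W(S^-1 M) iff I does, and S^-1 I and I generate the same submodule of S^-1 M.
  Hence (a) and (b) impose the same conditions. If S avoids W_R(M) and Z_R(M), every s in S
  acts bijectively on M, so m \<mapsto> m/1 is an R-linear bijection from M onto S^-1 M, and the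
  dual of Property A is invariant under such bijections.\<close>

lemma (in abelian_group) minus_eq_zero_iff:
  assumes "x \<in> carrier G" "y \<in> carrier G"
  shows "x \<ominus> y = \<zero> \<longleftrightarrow> x = y"
  using assms by (metis add.inv_solve_right' l_zero minus_eq zero_closed)

lemma (in cring) ideal_by_closure:
  assumes "I \<subseteq> carrier R" "\<zero> \<in> I" "\<And>a b. a \<in> I \<Longrightarrow> b \<in> I \<Longrightarrow> a \<oplus> b \<in> I"
    and "\<And>a x. a \<in> I \<Longrightarrow> x \<in> carrier R \<Longrightarrow> x \<otimes> a \<in> I"
  shows "ideal I R"
proof (rule idealI)
  show "subgroup I (add_monoid R)"
  proof (rule add.subgroupI)
    fix a assume "a \<in> I"
    then have "(\<ominus> \<one>) \<otimes> a \<in> I" by (simp add: assms(4))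
    with \<open>a \<in> I\<close> show "\<ominus> a \<in> I" using assms(1) by (auto simp: l_minus)
  qed (use assms in auto)
next
  fix a x assume "a \<in> I" "x \<in> carrier R"
  then show "x \<otimes> a \<in> I" "a \<otimes> x \<in> I"
    using assms(1,4) m_comm[of a x] by auto
qed (rule ring_axioms)

lemma generate_subset_of_eq_structure:
  assumes "carrier G = carrier G'" "monoid.mult G = monoid.mult G'" "one G = one G'"
    and "x \<in> generate G K"
  shows "x \<in> generate G' K"
proof -
  have inv_eq: "m_inv G = m_inv G'" unfolding m_inv_def using assms(1-3) by simp
  from assms(4) show ?thesis
  proof induction
    case one then show ?case using assms(3) generate.one[of G' K] by simp
  next
    case (incl h) then show ?case by (rule generate.incl)
  next
    case (inv h) then show ?case using generate.inv[of h K G'] inv_eq by simp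
  next
    case (eng h1 h2) then show ?case using generate.eng[of h1 G' K h2] assms(2) by simp
  qed
qed

lemma generate_cong:
  assumes "carrier G = carrier G'" "monoid.mult G = monoid.mult G'" "one G = one G'"
  shows "generate G K = generate G' K"
  using generate_subset_of_eq_structure[OF assms] generate_subset_of_eq_structure[OF assms[symmetric]]
  by blast

lemma (in group) bij_hom_imp_group_hom:
  assumes bij: "bij_betw f (carrier G) (carrier H)" and one: "f \<one> = \<one>\<^bsub>H\<^esub>"
    and mult: "\<And>x y. x \<in> carrier G \<Longrightarrow> y \<in> carrier G \<Longrightarrow> f (x \<otimes> y) = f x \<otimes>\<^bsub>H\<^esub> f y"
  shows "group_hom G H f"
proof -
  have surj: "f ` carrier G = carrier H" using bij by (simp add: bij_betw_def)
  have "monoid H"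
  proof (rule monoidI)
    fix x y z assume "x \<in> carrier H" "y \<in> carrier H" "z \<in> carrier H"
    then obtain a b c where abc: "a \<in> carrier G" "b \<in> carrier G" "c \<in> carrier G" "x = f a" "y = f b" "z = f c"
      unfolding surj[symmetric] by blast
    have "x \<otimes>\<^bsub>H\<^esub> y = f (a \<otimes> b)" using abc by (simp add: mult)
    then show "x \<otimes>\<^bsub>H\<^esub> y \<in> carrier H" using abc surj by force
    have "x \<otimes>\<^bsub>H\<^esub> y \<otimes>\<^bsub>H\<^esub> z = f (a \<otimes> b \<otimes> c)"
      using abc by (simp add: mult)
    also have "\<dots> = x \<otimes>\<^bsub>H\<^esub> (y \<otimes>\<^bsub>H\<^esub> z)"
      using abc by (simp add: mult m_assoc)
    finally show "x \<otimes>\<^bsub>H\<^esub> y \<otimes>\<^bsub>H\<^esub> z = x \<otimes>\<^bsub>H\<^esub> (y \<otimes>\<^bsub>H\<^esub> z)" .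
  next
    fix x assume "x \<in> carrier H"
    then obtain a where a: "a \<in> carrier G" "x = f a" unfolding surj[symmetric] by blast
    show "\<one>\<^bsub>H\<^esub> \<otimes>\<^bsub>H\<^esub> x = x" "x \<otimes>\<^bsub>H\<^esub> \<one>\<^bsub>H\<^esub> = x"
      using a mult[of \<one> a] mult[of a \<one>] by (simp_all add: one)
  next
    show "\<one>\<^bsub>H\<^esub> \<in> carrier H" using surj one by force
  qed
  moreover have hom: "f \<in> hom G H"
    using surj mult by (intro homI) auto
  moreover have "G \<cong> H"
    unfolding is_iso_def iso_def using hom bij by blast
  ultimately show ?thesis
    by (intro group_hom.intro group_hom_axioms.intro is_group iso_imp_group)
qed

text \<open>The operations of the localisations are unions of classes over all representatives;
  for operations compatible with the relations these unions collapse to a single class.\<close>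

lemma Union_classes_compat2:
  assumes "equiv A r" "equiv B q" "equiv C p" "(a, s) \<in> A" "(b, t) \<in> B"
    and "\<And>a' s' b' t'. ((a, s), (a', s')) \<in> r \<Longrightarrow> ((b, t), (b', t')) \<in> q \<Longrightarrow>
      (g a s b t, g a' s' b' t') \<in> p"
  shows "\<Union>{p `` {g a' s' b' t'} | a' s' b' t'. (a', s') \<in> r `` {(a, s)} \<and> (b', t') \<in> q `` {(b, t)}}
    = p `` {g a s b t}"
proof -
  have "((a, s), (a, s)) \<in> r" "((b, t), (b, t)) \<in> q"
    using assms(1,2,4,5) by (auto simp: equiv_def refl_on_def)
  moreover have "p `` {g a' s' b' t'} = p `` {g a s b t}"
    if "((a, s), (a', s')) \<in> r" "((b, t), (b', t')) \<in> q" for a' s' b' t'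
    using equiv_class_eq[OF assms(3) assms(6)[OF that]] by simp
  ultimately show ?thesis by blast
qed

lemma Union_classes_compat1:
  assumes "equiv A r" "equiv C p" "(m, s) \<in> A"
    and "\<And>m' s'. ((m, s), (m', s')) \<in> r \<Longrightarrow> (g m s, g m' s') \<in> p"
  shows "\<Union>{p `` {g m' s'} | m' s'. (m', s') \<in> r `` {(m, s)}} = p `` {g m s}"
proof -
  have "((m, s), (m, s)) \<in> r" using assms(1,3) by (auto simp: equiv_def refl_on_def)
  moreover have "p `` {g m' s'} = p `` {g m s}" if "((m, s), (m', s')) \<in> r" for m' s'
    using equiv_class_eq[OF assms(2) assms(4)[OF that]] by simp
  ultimately show ?thesis by blast
qed

section \<open>Transport along linear bijections\<close>

locale linear_bijection = module R M for R and M +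
  fixes N :: "('a, 'e, 'f) module_scheme" and f :: "'c \<Rightarrow> 'e"
  assumes bij: "bij_betw f (carrier M) (carrier N)"
    and map_add: "\<And>x y. x \<in> carrier M \<Longrightarrow> y \<in> carrier M \<Longrightarrow> f (x \<oplus>\<^bsub>M\<^esub> y) = f x \<oplus>\<^bsub>N\<^esub> f y"
    and map_zero: "f \<zero>\<^bsub>M\<^esub> = \<zero>\<^bsub>N\<^esub>"
    and map_smult: "\<And>r x. r \<in> carrier R \<Longrightarrow> x \<in> carrier M \<Longrightarrow> f (r \<odot>\<^bsub>M\<^esub> x) = r \<odot>\<^bsub>N\<^esub> f x"
begin

lemma image_carrier: "f ` carrier M = carrier N"
  using bij by (simp add: bij_betw_def)

lemma image_eq_carrier_iff: "A \<subseteq> carrier M \<Longrightarrow> f ` A = carrier N \<longleftrightarrow> A = carrier M"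
  using bij by (metis bij_betw_def inj_on_image_eq_iff order_refl image_carrier)

lemma W_set_eq: "W_set R N = W_set R M"
proof -
  have "(\<lambda>y. r \<odot>\<^bsub>N\<^esub> y) ` carrier N = carrier N \<longleftrightarrow> (\<lambda>x. r \<odot>\<^bsub>M\<^esub> x) ` carrier M = carrier M"
    if r: "r \<in> carrier R" for r
  proof -
    have "(\<lambda>y. r \<odot>\<^bsub>N\<^esub> y) ` carrier N = f ` ((\<lambda>x. r \<odot>\<^bsub>M\<^esub> x) ` carrier M)"
      unfolding image_carrier[symmetric] image_image using r by (simp add: map_smult)
    moreover have "(\<lambda>x. r \<odot>\<^bsub>M\<^esub> x) ` carrier M \<subseteq> carrier M" using r by auto
    ultimately show ?thesis by (simp add: image_eq_carrier_iff)
  qed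
  then show ?thesis unfolding W_set_def by blast
qed

lemma smult_generators_eq:
  assumes I: "I \<subseteq> carrier R"
  shows "{a \<odot>\<^bsub>N\<^esub> y | a y. a \<in> I \<and> y \<in> carrier N} = f ` {a \<odot>\<^bsub>M\<^esub> x | a x. a \<in> I \<and> x \<in> carrier M}"
proof (intro equalityI subsetI)
  fix z assume "z \<in> {a \<odot>\<^bsub>N\<^esub> y | a y. a \<in> I \<and> y \<in> carrier N}"
  then obtain a x where "a \<in> I" "x \<in> carrier M" "z = a \<odot>\<^bsub>N\<^esub> f x"
    unfolding image_carrier[symmetric] by blast
  moreover from this have "z = f (a \<odot>\<^bsub>M\<^esub> x)" using I by (auto simp: map_smult)
  ultimately show "z \<in> f ` {a \<odot>\<^bsub>M\<^esub> x | a x. a \<in> I \<and> x \<in> carrier M}" by blast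
next
  fix z assume "z \<in> f ` {a \<odot>\<^bsub>M\<^esub> x | a x. a \<in> I \<and> x \<in> carrier M}"
  then obtain a x where "a \<in> I" "x \<in> carrier M" "z = f (a \<odot>\<^bsub>M\<^esub> x)" by blast
  moreover from this have "z = a \<odot>\<^bsub>N\<^esub> f x" using I by (auto simp: map_smult)
  ultimately show "z \<in> {a \<odot>\<^bsub>N\<^esub> y | a y. a \<in> I \<and> y \<in> carrier N}"
    unfolding image_carrier[symmetric] by blast
qed

lemma ideal_smult_eq:
  assumes I: "I \<subseteq> carrier R"
  shows "ideal_smult N I = f ` ideal_smult M I"
proof -
  interpret add_hom: group_hom "add_monoid M" "add_monoid N" f
    using bij by (intro M.add.bij_hom_imp_group_hom) (simp_all add: map_add map_zero)
  have "{a \<odot>\<^bsub>M\<^esub> x | a x. a \<in> I \<and> x \<in> carrier M} \<subseteq> carrier M"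
    using I by auto
  then show ?thesis
    unfolding ideal_smult_def smult_generators_eq[OF I] by (simp add: add_hom.generate_img)
qed

lemma dual_prop_A_iff: "dual_prop_A R N \<longleftrightarrow> dual_prop_A R M"
proof -
  have "ideal_smult N I = carrier N \<longleftrightarrow> ideal_smult M I = carrier M" if "I \<subseteq> carrier R" for I
  proof -
    have "ideal_smult M I \<subseteq> carrier M"
      unfolding ideal_smult_def using that by (intro M.add.generate_incl) auto
    then show ?thesis by (simp add: ideal_smult_eq[OF that] image_eq_carrier_iff)
  qed
  moreover have "W_set R M \<subseteq> carrier R" unfolding W_set_def by auto
  ultimately show ?thesis unfolding dual_prop_A_def W_set_eq by blast
qed

end

section \<open>Localisation\<close>

locale localization = module +
  fixes S :: "'a set"
  assumes S_mult_closed: "mult_closed R S"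
begin

lemma S_carrier [simp]: "s \<in> S \<Longrightarrow> s \<in> carrier R"
  and one_in_S [simp]: "\<one> \<in> S"
  and mult_in_S [simp]: "s \<in> S \<Longrightarrow> t \<in> S \<Longrightarrow> s \<otimes> t \<in> S"
  using S_mult_closed unfolding mult_closed_def by auto

abbreviation "ER \<equiv> ring_loc_rel R S"
abbreviation "EM \<equiv> loc_rel R M S"
abbreviation "RS \<equiv> loc_ring R S"
abbreviation "MS \<equiv> loc_module R M S"
abbreviation "MS' \<equiv> loc_module_loc R M S"

lemma smult_smult_eq:
  assumes "a \<in> carrier R" "b \<in> carrier R" "c \<in> carrier R" "d \<in> carrier R" "x \<in> carrier M"
    and "a \<otimes> b = c \<otimes> d"
  shows "a \<odot>\<^bsub>M\<^esub> (b \<odot>\<^bsub>M\<^esub> x) = c \<odot>\<^bsub>M\<^esub> (d \<odot>\<^bsub>M\<^esub> x)"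
  using assms by (simp add: smult_assoc1[symmetric])

lemma ring_loc_rel_iff:
  "((a, s), (a', s')) \<in> ER \<longleftrightarrow> a \<in> carrier R \<and> s \<in> S \<and> a' \<in> carrier R \<and> s' \<in> S \<and>
     (\<exists>u\<in>S. u \<otimes> s' \<otimes> a = u \<otimes> s \<otimes> a')"
proof -
  have "u \<otimes> (s' \<otimes> a \<ominus> s \<otimes> a') = \<zero> \<longleftrightarrow> u \<otimes> s' \<otimes> a = u \<otimes> s \<otimes> a'"
    if "a \<in> carrier R" "s \<in> S" "a' \<in> carrier R" "s' \<in> S" "u \<in> S" for u
  proof -
    have "s \<in> carrier R" "s' \<in> carrier R" "u \<in> carrier R" using that by simp_all
    then have "u \<otimes> (s' \<otimes> a \<ominus> s \<otimes> a') = u \<otimes> s' \<otimes> a \<ominus> u \<otimes> s \<otimes> a'"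
      using that by algebra
    then show ?thesis using that by simp
  qed
  then show ?thesis unfolding ring_loc_rel_def by auto
qed

lemma loc_rel_iff:
  "((m, s), (m', s')) \<in> EM \<longleftrightarrow> m \<in> carrier M \<and> s \<in> S \<and> m' \<in> carrier M \<and> s' \<in> S \<and>
     (\<exists>u\<in>S. (u \<otimes> s') \<odot>\<^bsub>M\<^esub> m = (u \<otimes> s) \<odot>\<^bsub>M\<^esub> m')"
proof -
  have "u \<odot>\<^bsub>M\<^esub> (s' \<odot>\<^bsub>M\<^esub> m \<ominus>\<^bsub>M\<^esub> s \<odot>\<^bsub>M\<^esub> m') = \<zero>\<^bsub>M\<^esub> \<longleftrightarrow> (u \<otimes> s') \<odot>\<^bsub>M\<^esub> m = (u \<otimes> s) \<odot>\<^bsub>M\<^esub> m'"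
    if "m \<in> carrier M" "s \<in> S" "m' \<in> carrier M" "s' \<in> S" "u \<in> S" for u
  proof -
    have "u \<odot>\<^bsub>M\<^esub> (s' \<odot>\<^bsub>M\<^esub> m \<ominus>\<^bsub>M\<^esub> s \<odot>\<^bsub>M\<^esub> m') = (u \<otimes> s') \<odot>\<^bsub>M\<^esub> m \<ominus>\<^bsub>M\<^esub> (u \<otimes> s) \<odot>\<^bsub>M\<^esub> m'"
      using that by (simp add: M.minus_eq smult_r_distr smult_r_minus smult_assoc1)
    then show ?thesis using that by (simp add: M.minus_eq_zero_iff)
  qed
  then show ?thesis unfolding loc_rel_def by auto
qed

lemma equiv_ring_loc_rel: "equiv (carrier R \<times> S) ER"
proof (rule equivI)
  show "refl_on (carrier R \<times> S) ER"
    by (rule refl_onI) (force simp: ring_loc_rel_iff)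
  show "sym ER"
    by (rule symI, clarify) (simp add: ring_loc_rel_iff, metis)
  show "trans ER"
  proof (rule transI, clarify)
    fix a s a' s' a'' s''
    assume "((a, s), (a', s')) \<in> ER" "((a', s'), (a'', s'')) \<in> ER"
    then obtain u v where uv: "a \<in> carrier R" "a' \<in> carrier R" "a'' \<in> carrier R"
        "s \<in> S" "s' \<in> S" "s'' \<in> S" "u \<in> S" "v \<in> S"
      and e1: "u \<otimes> s' \<otimes> a = u \<otimes> s \<otimes> a'" and e2: "v \<otimes> s'' \<otimes> a' = v \<otimes> s' \<otimes> a''"
      unfolding ring_loc_rel_iff by blast
    have c: "s \<in> carrier R" "s' \<in> carrier R" "s'' \<in> carrier R" "u \<in> carrier R" "v \<in> carrier R"
      using uv by simp_all
    have "(u \<otimes> v \<otimes> s') \<otimes> s'' \<otimes> a = (v \<otimes> s'') \<otimes> (u \<otimes> s' \<otimes> a)" using uv c by algebra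
    also have "\<dots> = (u \<otimes> s) \<otimes> (v \<otimes> s'' \<otimes> a')" using uv c by (simp only: e1) algebra
    also have "\<dots> = (u \<otimes> v \<otimes> s') \<otimes> s \<otimes> a''" using uv c by (simp only: e2) algebra
    finally show "((a, s), (a'', s'')) \<in> ER"
      using uv unfolding ring_loc_rel_iff by (blast intro: mult_in_S)
  qed
qed (auto simp: ring_loc_rel_def)

lemma equiv_loc_rel: "equiv (carrier M \<times> S) EM"
proof (rule equivI)
  show "refl_on (carrier M \<times> S) EM"
    by (rule refl_onI) (force simp: loc_rel_iff)
  show "sym EM"
    by (rule symI, clarify) (simp add: loc_rel_iff, metis)
  show "trans EM"
  proof (rule transI, clarify)
    fix m s m' s' m'' s''
    assume "((m, s), (m', s')) \<in> EM" "((m', s'), (m'', s'')) \<in> EM"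
    then obtain u v where uv: "m \<in> carrier M" "m' \<in> carrier M" "m'' \<in> carrier M"
        "s \<in> S" "s' \<in> S" "s'' \<in> S" "u \<in> S" "v \<in> S"
      and e1: "(u \<otimes> s') \<odot>\<^bsub>M\<^esub> m = (u \<otimes> s) \<odot>\<^bsub>M\<^esub> m'"
      and e2: "(v \<otimes> s'') \<odot>\<^bsub>M\<^esub> m' = (v \<otimes> s') \<odot>\<^bsub>M\<^esub> m''"
      unfolding loc_rel_iff by blast
    have c: "s \<in> carrier R" "s' \<in> carrier R" "s'' \<in> carrier R" "u \<in> carrier R" "v \<in> carrier R"
      using uv by simp_all
    have "(u \<otimes> v \<otimes> s' \<otimes> s'') \<odot>\<^bsub>M\<^esub> m = (v \<otimes> s'') \<odot>\<^bsub>M\<^esub> ((u \<otimes> s') \<odot>\<^bsub>M\<^esub> m)"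
      using uv by (simp add: smult_assoc1[symmetric]) (use c in algebra)
    also have "\<dots> = (u \<otimes> s) \<odot>\<^bsub>M\<^esub> ((v \<otimes> s'') \<odot>\<^bsub>M\<^esub> m')"
      using uv c by (simp only: e1) (rule smult_smult_eq; simp add: m_comm)
    also have "\<dots> = (u \<otimes> v \<otimes> s' \<otimes> s) \<odot>\<^bsub>M\<^esub> m''"
      using uv by (simp only: e2) (simp add: smult_assoc1[symmetric], use c in algebra)
    finally show "((m, s), (m'', s'')) \<in> EM"
      using uv unfolding loc_rel_iff by (blast intro: mult_in_S)
  qed
qed (auto simp: loc_rel_def)

definition rfrac :: "'a \<Rightarrow> 'a \<Rightarrow> ('a \<times> 'a) set" where
  "rfrac a s = ER `` {(a, s)}"

definition mfrac :: "'c \<Rightarrow> 'a \<Rightarrow> ('c \<times> 'a) set" where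
  "mfrac m s = EM `` {(m, s)}"

lemma rfrac_eq_iff:
  "a \<in> carrier R \<Longrightarrow> s \<in> S \<Longrightarrow> a' \<in> carrier R \<Longrightarrow> s' \<in> S \<Longrightarrow>
     rfrac a s = rfrac a' s' \<longleftrightarrow> ((a, s), (a', s')) \<in> ER"
  unfolding rfrac_def by (rule eq_equiv_class_iff[OF equiv_ring_loc_rel]) auto

lemma mfrac_eq_iff:
  "m \<in> carrier M \<Longrightarrow> s \<in> S \<Longrightarrow> m' \<in> carrier M \<Longrightarrow> s' \<in> S \<Longrightarrow>
     mfrac m s = mfrac m' s' \<longleftrightarrow> ((m, s), (m', s')) \<in> EM"
  unfolding mfrac_def by (rule eq_equiv_class_iff[OF equiv_loc_rel]) auto

lemma rfrac_eqI:
  "a \<in> carrier R \<Longrightarrow> s \<in> S \<Longrightarrow> a' \<in> carrier R \<Longrightarrow> s' \<in> S \<Longrightarrow> s' \<otimes> a = s \<otimes> a' \<Longrightarrow>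
     rfrac a s = rfrac a' s'"
  by (subst rfrac_eq_iff) (auto simp: ring_loc_rel_iff intro!: bexI[of _ \<one>])

lemma mfrac_eqI:
  "m \<in> carrier M \<Longrightarrow> s \<in> S \<Longrightarrow> m' \<in> carrier M \<Longrightarrow> s' \<in> S \<Longrightarrow> s' \<odot>\<^bsub>M\<^esub> m = s \<odot>\<^bsub>M\<^esub> m' \<Longrightarrow>
     mfrac m s = mfrac m' s'"
  by (subst mfrac_eq_iff) (auto simp: loc_rel_iff intro!: bexI[of _ \<one>])

lemma ring_loc_rel_add:
  assumes "((a, s), (a', s')) \<in> ER" "((b, t), (b', t')) \<in> ER"
  shows "((t \<otimes> a \<oplus> s \<otimes> b, s \<otimes> t), (t' \<otimes> a' \<oplus> s' \<otimes> b', s' \<otimes> t')) \<in> ER"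
proof -
  from assms obtain u v where uv: "a \<in> carrier R" "a' \<in> carrier R" "b \<in> carrier R" "b' \<in> carrier R"
      "s \<in> S" "s' \<in> S" "t \<in> S" "t' \<in> S" "u \<in> S" "v \<in> S"
    and e1: "u \<otimes> s' \<otimes> a = u \<otimes> s \<otimes> a'" and e2: "v \<otimes> t' \<otimes> b = v \<otimes> t \<otimes> b'"
    unfolding ring_loc_rel_iff by blast
  have c: "s \<in> carrier R" "s' \<in> carrier R" "t \<in> carrier R" "t' \<in> carrier R" "u \<in> carrier R" "v \<in> carrier R"
    using uv by simp_all
  have "(u \<otimes> v) \<otimes> (s' \<otimes> t') \<otimes> (t \<otimes> a \<oplus> s \<otimes> b)
      = (v \<otimes> t' \<otimes> t) \<otimes> (u \<otimes> s' \<otimes> a) \<oplus> (u \<otimes> s' \<otimes> s) \<otimes> (v \<otimes> t' \<otimes> b)"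
    using uv c by algebra
  also have "\<dots> = (u \<otimes> v) \<otimes> (s \<otimes> t) \<otimes> (t' \<otimes> a' \<oplus> s' \<otimes> b')"
    using uv c by (simp only: e1 e2) algebra
  finally show ?thesis
    using uv by (auto simp: ring_loc_rel_iff intro!: bexI[of _ "u \<otimes> v"])
qed

lemma ring_loc_rel_mult:
  assumes "((a, s), (a', s')) \<in> ER" "((b, t), (b', t')) \<in> ER"
  shows "((a \<otimes> b, s \<otimes> t), (a' \<otimes> b', s' \<otimes> t')) \<in> ER"
proof -
  from assms obtain u v where uv: "a \<in> carrier R" "a' \<in> carrier R" "b \<in> carrier R" "b' \<in> carrier R"
      "s \<in> S" "s' \<in> S" "t \<in> S" "t' \<in> S" "u \<in> S" "v \<in> S"
    and e1: "u \<otimes> s' \<otimes> a = u \<otimes> s \<otimes> a'" and e2: "v \<otimes> t' \<otimes> b = v \<otimes> t \<otimes> b'"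
    unfolding ring_loc_rel_iff by blast
  have c: "s \<in> carrier R" "s' \<in> carrier R" "t \<in> carrier R" "t' \<in> carrier R" "u \<in> carrier R" "v \<in> carrier R"
    using uv by simp_all
  have "(u \<otimes> v) \<otimes> (s' \<otimes> t') \<otimes> (a \<otimes> b) = (u \<otimes> s' \<otimes> a) \<otimes> (v \<otimes> t' \<otimes> b)"
    using uv c by algebra
  also have "\<dots> = (u \<otimes> v) \<otimes> (s \<otimes> t) \<otimes> (a' \<otimes> b')"
    using uv c by (simp only: e1 e2) algebra
  finally show ?thesis
    using uv by (auto simp: ring_loc_rel_iff intro!: bexI[of _ "u \<otimes> v"])
qed

lemma loc_rel_add:
  assumes "((m, s), (m', s')) \<in> EM" "((n, t), (n', t')) \<in> EM"
  shows "((t \<odot>\<^bsub>M\<^esub> m \<oplus>\<^bsub>M\<^esub> s \<odot>\<^bsub>M\<^esub> n, s \<otimes> t), (t' \<odot>\<^bsub>M\<^esub> m' \<oplus>\<^bsub>M\<^esub> s' \<odot>\<^bsub>M\<^esub> n', s' \<otimes> t')) \<in> EM"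
proof -
  from assms obtain u v where uv: "m \<in> carrier M" "m' \<in> carrier M" "n \<in> carrier M" "n' \<in> carrier M"
      "s \<in> S" "s' \<in> S" "t \<in> S" "t' \<in> S" "u \<in> S" "v \<in> S"
    and e1: "(u \<otimes> s') \<odot>\<^bsub>M\<^esub> m = (u \<otimes> s) \<odot>\<^bsub>M\<^esub> m'"
    and e2: "(v \<otimes> t') \<odot>\<^bsub>M\<^esub> n = (v \<otimes> t) \<odot>\<^bsub>M\<^esub> n'"
    unfolding loc_rel_iff by blast
  have c: "s \<in> carrier R" "s' \<in> carrier R" "t \<in> carrier R" "t' \<in> carrier R" "u \<in> carrier R" "v \<in> carrier R"
    using uv by simp_all
  let ?w = "u \<otimes> v"
  have "(?w \<otimes> (s' \<otimes> t')) \<odot>\<^bsub>M\<^esub> (t \<odot>\<^bsub>M\<^esub> m \<oplus>\<^bsub>M\<^esub> s \<odot>\<^bsub>M\<^esub> n)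
      = (v \<otimes> t' \<otimes> t) \<odot>\<^bsub>M\<^esub> ((u \<otimes> s') \<odot>\<^bsub>M\<^esub> m) \<oplus>\<^bsub>M\<^esub> (u \<otimes> s' \<otimes> s) \<odot>\<^bsub>M\<^esub> ((v \<otimes> t') \<odot>\<^bsub>M\<^esub> n)"
    using uv by (simp add: smult_r_distr smult_assoc1[symmetric]) (use c in algebra)
  also have "\<dots> = (v \<otimes> t' \<otimes> t) \<odot>\<^bsub>M\<^esub> ((u \<otimes> s) \<odot>\<^bsub>M\<^esub> m') \<oplus>\<^bsub>M\<^esub> (u \<otimes> s' \<otimes> s) \<odot>\<^bsub>M\<^esub> ((v \<otimes> t) \<odot>\<^bsub>M\<^esub> n')"
    by (simp only: e1 e2)
  also have "\<dots> = (?w \<otimes> (s \<otimes> t)) \<odot>\<^bsub>M\<^esub> (t' \<odot>\<^bsub>M\<^esub> m' \<oplus>\<^bsub>M\<^esub> s' \<odot>\<^bsub>M\<^esub> n')"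
    using uv by (simp add: smult_r_distr smult_assoc1[symmetric]) (use c in algebra)
  finally show ?thesis
    using uv by (auto simp: loc_rel_iff intro!: bexI[of _ ?w])
qed

lemma loc_rel_smult:
  assumes "((m, s), (m', s')) \<in> EM" "r \<in> carrier R"
  shows "((r \<odot>\<^bsub>M\<^esub> m, s), (r \<odot>\<^bsub>M\<^esub> m', s')) \<in> EM"
proof -
  from assms obtain u where u: "m \<in> carrier M" "m' \<in> carrier M" "s \<in> S" "s' \<in> S" "u \<in> S"
    and e: "(u \<otimes> s') \<odot>\<^bsub>M\<^esub> m = (u \<otimes> s) \<odot>\<^bsub>M\<^esub> m'"
    unfolding loc_rel_iff by blast
  have "(u \<otimes> s') \<odot>\<^bsub>M\<^esub> (r \<odot>\<^bsub>M\<^esub> m) = r \<odot>\<^bsub>M\<^esub> ((u \<otimes> s') \<odot>\<^bsub>M\<^esub> m)"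
    using u assms(2) by (intro smult_smult_eq) (simp_all add: m_comm)
  also have "\<dots> = (u \<otimes> s) \<odot>\<^bsub>M\<^esub> (r \<odot>\<^bsub>M\<^esub> m')"
    using u assms(2) by (simp only: e) (intro smult_smult_eq, simp_all add: m_comm)
  finally show ?thesis
    using u assms(2) by (auto simp: loc_rel_iff)
qed

lemma loc_rel_frac_smult:
  assumes "((a, t), (a', t')) \<in> ER" "((m, s), (m', s')) \<in> EM"
  shows "((a \<odot>\<^bsub>M\<^esub> m, t \<otimes> s), (a' \<odot>\<^bsub>M\<^esub> m', t' \<otimes> s')) \<in> EM"
proof -
  from assms obtain u v where uv: "a \<in> carrier R" "a' \<in> carrier R" "m \<in> carrier M" "m' \<in> carrier M"
      "s \<in> S" "s' \<in> S" "t \<in> S" "t' \<in> S" "u \<in> S" "v \<in> S"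
    and e1: "v \<otimes> t' \<otimes> a = v \<otimes> t \<otimes> a'" and e2: "(u \<otimes> s') \<odot>\<^bsub>M\<^esub> m = (u \<otimes> s) \<odot>\<^bsub>M\<^esub> m'"
    unfolding ring_loc_rel_iff loc_rel_iff by blast
  have c: "s \<in> carrier R" "s' \<in> carrier R" "t \<in> carrier R" "t' \<in> carrier R" "u \<in> carrier R" "v \<in> carrier R"
    using uv by simp_all
  have "((v \<otimes> u) \<otimes> (t' \<otimes> s')) \<odot>\<^bsub>M\<^esub> (a \<odot>\<^bsub>M\<^esub> m) = (v \<otimes> t' \<otimes> a) \<odot>\<^bsub>M\<^esub> ((u \<otimes> s') \<odot>\<^bsub>M\<^esub> m)"
    using uv by (intro smult_smult_eq) (simp_all, use c in algebra)
  also have "\<dots> = (v \<otimes> t \<otimes> a') \<odot>\<^bsub>M\<^esub> ((u \<otimes> s) \<odot>\<^bsub>M\<^esub> m')"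
    by (simp only: e1 e2)
  also have "\<dots> = ((v \<otimes> u) \<otimes> (t \<otimes> s)) \<odot>\<^bsub>M\<^esub> (a' \<odot>\<^bsub>M\<^esub> m')"
    using uv by (intro smult_smult_eq) (simp_all, use c in algebra)
  finally show ?thesis
    using uv by (auto simp: loc_rel_iff intro!: bexI[of _ "v \<otimes> u"])
qed

lemma carrier_loc_ring: "carrier RS = case_prod rfrac ` (carrier R \<times> S)"
  unfolding loc_ring_def Let_def quotient_def rfrac_def by auto

lemma carrier_loc_module: "carrier MS = case_prod mfrac ` (carrier M \<times> S)"
  unfolding loc_module_def Let_def quotient_def mfrac_def by auto

lemma carrier_loc_module_loc: "carrier MS' = carrier MS"
  unfolding loc_module_def loc_module_loc_def Let_def by simp

lemma rfrac_closed [simp]: "a \<in> carrier R \<Longrightarrow> s \<in> S \<Longrightarrow> rfrac a s \<in> carrier RS"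
  unfolding carrier_loc_ring by force

lemma mfrac_closed [simp]: "m \<in> carrier M \<Longrightarrow> s \<in> S \<Longrightarrow> mfrac m s \<in> carrier MS"
  unfolding carrier_loc_module by force

lemma loc_ring_cases:
  assumes "x \<in> carrier RS"
  obtains a s where "a \<in> carrier R" "s \<in> S" "x = rfrac a s"
  using assms unfolding carrier_loc_ring by auto

lemma loc_module_cases:
  assumes "x \<in> carrier MS"
  obtains m s where "m \<in> carrier M" "s \<in> S" "x = mfrac m s"
  using assms unfolding carrier_loc_module by auto

lemma zero_loc_ring: "\<zero>\<^bsub>RS\<^esub> = rfrac \<zero> \<one>"
  and one_loc_ring: "\<one>\<^bsub>RS\<^esub> = rfrac \<one> \<one>"
  unfolding loc_ring_def Let_def rfrac_def by simp_all

lemma rfrac_add: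
  assumes "a \<in> carrier R" "s \<in> S" "b \<in> carrier R" "t \<in> S"
  shows "rfrac a s \<oplus>\<^bsub>RS\<^esub> rfrac b t = rfrac (t \<otimes> a \<oplus> s \<otimes> b) (s \<otimes> t)"
  unfolding loc_ring_def Let_def rfrac_def ring.simps
  by (rule Union_classes_compat2[OF equiv_ring_loc_rel equiv_ring_loc_rel equiv_ring_loc_rel])
    (use assms in \<open>auto intro: ring_loc_rel_add\<close>)

lemma rfrac_mult:
  assumes "a \<in> carrier R" "s \<in> S" "b \<in> carrier R" "t \<in> S"
  shows "rfrac a s \<otimes>\<^bsub>RS\<^esub> rfrac b t = rfrac (a \<otimes> b) (s \<otimes> t)"
  unfolding loc_ring_def Let_def rfrac_def monoid.simps
  by (rule Union_classes_compat2[OF equiv_ring_loc_rel equiv_ring_loc_rel equiv_ring_loc_rel])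
    (use assms in \<open>auto intro: ring_loc_rel_mult\<close>)

lemma zero_loc_module: "\<zero>\<^bsub>MS\<^esub> = mfrac \<zero>\<^bsub>M\<^esub> \<one>"
  unfolding loc_module_def Let_def mfrac_def by simp

lemma mfrac_add:
  assumes "m \<in> carrier M" "s \<in> S" "n \<in> carrier M" "t \<in> S"
  shows "mfrac m s \<oplus>\<^bsub>MS\<^esub> mfrac n t = mfrac (t \<odot>\<^bsub>M\<^esub> m \<oplus>\<^bsub>M\<^esub> s \<odot>\<^bsub>M\<^esub> n) (s \<otimes> t)"
  unfolding loc_module_def Let_def mfrac_def ring.simps
  by (rule Union_classes_compat2[OF equiv_loc_rel equiv_loc_rel equiv_loc_rel])
    (use assms in \<open>auto intro: loc_rel_add\<close>)

lemma mfrac_smult: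
  assumes "r \<in> carrier R" "m \<in> carrier M" "s \<in> S"
  shows "r \<odot>\<^bsub>MS\<^esub> mfrac m s = mfrac (r \<odot>\<^bsub>M\<^esub> m) s"
  unfolding loc_module_def Let_def mfrac_def module.simps
  by (rule Union_classes_compat1[OF equiv_loc_rel equiv_loc_rel])
    (use assms in \<open>auto intro: loc_rel_smult\<close>)

lemma rfrac_smult_mfrac:
  assumes "a \<in> carrier R" "t \<in> S" "m \<in> carrier M" "s \<in> S"
  shows "rfrac a t \<odot>\<^bsub>MS'\<^esub> mfrac m s = mfrac (a \<odot>\<^bsub>M\<^esub> m) (t \<otimes> s)"
  unfolding loc_module_loc_def Let_def mfrac_def rfrac_def module.simps
  by (rule Union_classes_compat2[OF equiv_ring_loc_rel equiv_loc_rel equiv_loc_rel])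
    (use assms in \<open>auto intro: loc_rel_frac_smult\<close>)

lemma cring_loc_ring: "cring RS"
proof (rule cringI)
  show "abelian_group RS"
  proof (rule abelian_groupI)
    fix x y assume "x \<in> carrier RS" "y \<in> carrier RS"
    then obtain a s b t where ab: "a \<in> carrier R" "b \<in> carrier R" "s \<in> S" "t \<in> S"
      and xy: "x = rfrac a s" "y = rfrac b t"
      by (metis loc_ring_cases)
    have c: "s \<in> carrier R" "t \<in> carrier R" using ab by simp_all
    show "x \<oplus>\<^bsub>RS\<^esub> y \<in> carrier RS"
      using ab by (simp add: xy rfrac_add)
    show "x \<oplus>\<^bsub>RS\<^esub> y = y \<oplus>\<^bsub>RS\<^esub> x"
      using ab by (simp add: xy rfrac_add) (rule rfrac_eqI, simp_all, use c in algebra)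
  next
    fix x y z assume "x \<in> carrier RS" "y \<in> carrier RS" "z \<in> carrier RS"
    then obtain a s b t d u where abd: "a \<in> carrier R" "b \<in> carrier R" "d \<in> carrier R"
        "s \<in> S" "t \<in> S" "u \<in> S"
      and xyz: "x = rfrac a s" "y = rfrac b t" "z = rfrac d u"
      by (metis loc_ring_cases)
    have c: "s \<in> carrier R" "t \<in> carrier R" "u \<in> carrier R" using abd by simp_all
    show "x \<oplus>\<^bsub>RS\<^esub> y \<oplus>\<^bsub>RS\<^esub> z = x \<oplus>\<^bsub>RS\<^esub> (y \<oplus>\<^bsub>RS\<^esub> z)"
      using abd by (simp add: xyz rfrac_add) (rule rfrac_eqI, simp_all, use c in algebra)
  next
    fix x assume "x \<in> carrier RS"
    then obtain a s where a: "a \<in> carrier R" "s \<in> S" and x: "x = rfrac a s"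
      by (metis loc_ring_cases)
    have c: "s \<in> carrier R" using a by simp
    show "\<zero>\<^bsub>RS\<^esub> \<oplus>\<^bsub>RS\<^esub> x = x"
      using a by (simp add: x zero_loc_ring rfrac_add)
    have "rfrac (\<ominus> a) s \<oplus>\<^bsub>RS\<^esub> x = \<zero>\<^bsub>RS\<^esub>"
      using a by (simp add: x zero_loc_ring rfrac_add) (rule rfrac_eqI, simp_all, use c in algebra)
    then show "\<exists>y\<in>carrier RS. y \<oplus>\<^bsub>RS\<^esub> x = \<zero>\<^bsub>RS\<^esub>"
      using a by (intro bexI[of _ "rfrac (\<ominus> a) s"]) simp_all
  qed (simp add: zero_loc_ring)
next
  show "comm_monoid RS"
  proof (rule comm_monoidI)
    fix x y assume "x \<in> carrier RS" "y \<in> carrier RS"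
    then obtain a s b t where ab: "a \<in> carrier R" "b \<in> carrier R" "s \<in> S" "t \<in> S"
      and xy: "x = rfrac a s" "y = rfrac b t"
      by (metis loc_ring_cases)
    have c: "s \<in> carrier R" "t \<in> carrier R" using ab by simp_all
    show "x \<otimes>\<^bsub>RS\<^esub> y \<in> carrier RS"
      using ab by (simp add: xy rfrac_mult)
    show "x \<otimes>\<^bsub>RS\<^esub> y = y \<otimes>\<^bsub>RS\<^esub> x"
      using ab by (simp add: xy rfrac_mult) (rule rfrac_eqI, simp_all, use c in algebra)
  next
    fix x y z assume "x \<in> carrier RS" "y \<in> carrier RS" "z \<in> carrier RS"
    then obtain a s b t d u where abd: "a \<in> carrier R" "b \<in> carrier R" "d \<in> carrier R"
        "s \<in> S" "t \<in> S" "u \<in> S"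
      and xyz: "x = rfrac a s" "y = rfrac b t" "z = rfrac d u"
      by (metis loc_ring_cases)
    have c: "s \<in> carrier R" "t \<in> carrier R" "u \<in> carrier R" using abd by simp_all
    show "x \<otimes>\<^bsub>RS\<^esub> y \<otimes>\<^bsub>RS\<^esub> z = x \<otimes>\<^bsub>RS\<^esub> (y \<otimes>\<^bsub>RS\<^esub> z)"
      using abd by (simp add: xyz rfrac_mult) (rule rfrac_eqI, simp_all, use c in algebra)
  next
    fix x assume "x \<in> carrier RS"
    then obtain a s where a: "a \<in> carrier R" "s \<in> S" and x: "x = rfrac a s"
      by (metis loc_ring_cases)
    show "\<one>\<^bsub>RS\<^esub> \<otimes>\<^bsub>RS\<^esub> x = x"
      using a by (simp add: x one_loc_ring rfrac_mult)
  qed (simp add: one_loc_ring)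
next
  fix x y z assume "x \<in> carrier RS" "y \<in> carrier RS" "z \<in> carrier RS"
  then obtain a s b t d u where abd: "a \<in> carrier R" "b \<in> carrier R" "d \<in> carrier R"
      "s \<in> S" "t \<in> S" "u \<in> S"
    and xyz: "x = rfrac a s" "y = rfrac b t" "z = rfrac d u"
    by (metis loc_ring_cases)
  have c: "s \<in> carrier R" "t \<in> carrier R" "u \<in> carrier R" using abd by simp_all
  show "(x \<oplus>\<^bsub>RS\<^esub> y) \<otimes>\<^bsub>RS\<^esub> z = x \<otimes>\<^bsub>RS\<^esub> z \<oplus>\<^bsub>RS\<^esub> y \<otimes>\<^bsub>RS\<^esub> z"
    using abd by (simp add: xyz rfrac_add rfrac_mult) (rule rfrac_eqI, simp_all, use c in algebra)
qed

lemma ring_loc_ring: "ring RS"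
  using cring_loc_ring by (rule cring.axioms(1))

lemma rfrac_one_mult: "a \<in> carrier R \<Longrightarrow> s \<in> S \<Longrightarrow> rfrac \<one> s \<otimes>\<^bsub>RS\<^esub> rfrac a \<one> = rfrac a s"
  by (simp add: rfrac_mult)

lemma rfrac_mult_cancel: "a \<in> carrier R \<Longrightarrow> s \<in> S \<Longrightarrow> rfrac s \<one> \<otimes>\<^bsub>RS\<^esub> rfrac a s = rfrac a \<one>"
  by (simp add: rfrac_mult) (rule rfrac_eqI, simp_all add: m_comm)

definition loc_ideal :: "'a set \<Rightarrow> ('a \<times> 'a) set set" where
  "loc_ideal I = {rfrac b t | b t. b \<in> I \<and> t \<in> S}"

lemma ideal_loc_ideal:
  assumes "ideal I R"
  shows "ideal (loc_ideal I) RS"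
proof (rule cring.ideal_by_closure[OF cring_loc_ring])
  interpret I: ideal I R by fact
  show "loc_ideal I \<subseteq> carrier RS"
    unfolding loc_ideal_def using I.a_subset by force
  show "\<zero>\<^bsub>RS\<^esub> \<in> loc_ideal I"
    unfolding loc_ideal_def zero_loc_ring using I.zero_closed one_in_S by blast
  fix x y assume "x \<in> loc_ideal I"
  then obtain b t where b: "b \<in> I" "t \<in> S" and x: "x = rfrac b t"
    unfolding loc_ideal_def by blast
  have bc: "b \<in> carrier R" using b I.a_subset by blast
  show "y \<otimes>\<^bsub>RS\<^esub> x \<in> loc_ideal I" if "y \<in> carrier RS"
  proof -
    from that obtain d u where d: "d \<in> carrier R" "u \<in> S" and y: "y = rfrac d u"
      by (rule loc_ring_cases)
    have "y \<otimes>\<^bsub>RS\<^esub> x = rfrac (d \<otimes> b) (u \<otimes> t)"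
      using b bc d by (simp add: x y rfrac_mult)
    moreover have "d \<otimes> b \<in> I" using b d by (simp add: I.I_l_closed)
    ultimately show ?thesis unfolding loc_ideal_def using b d mult_in_S by blast
  qed
  show "x \<oplus>\<^bsub>RS\<^esub> y \<in> loc_ideal I" if "y \<in> loc_ideal I"
  proof -
    from that obtain d u where d: "d \<in> I" "u \<in> S" and y: "y = rfrac d u"
      unfolding loc_ideal_def by blast
    have dc: "d \<in> carrier R" using d I.a_subset by blast
    have "x \<oplus>\<^bsub>RS\<^esub> y = rfrac (u \<otimes> b \<oplus> t \<otimes> d) (t \<otimes> u)"
      using b bc d dc by (simp add: x y rfrac_add)
    moreover have "u \<otimes> b \<oplus> t \<otimes> d \<in> I" using b d by (simp add: I.I_l_closed)
    ultimately show ?thesis unfolding loc_ideal_def using b d mult_in_S by blast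
  qed
qed

lemma loc_ideal_genideal_subset:
  assumes K: "ideal K RS" and A: "A \<subseteq> carrier R" and AK: "\<And>a. a \<in> A \<Longrightarrow> rfrac a \<one> \<in> K"
  shows "loc_ideal (Idl A) \<subseteq> K"
proof -
  interpret K: ideal K RS by fact
  define J where "J = {b \<in> carrier R. rfrac b \<one> \<in> K}"
  have "ideal J R"
  proof (rule ideal_by_closure)
    show "J \<subseteq> carrier R" unfolding J_def by blast
    show "\<zero> \<in> J"
      unfolding J_def using additive_subgroup.zero_closed[OF K.is_additive_subgroup]
      by (simp add: zero_loc_ring)
  next
    fix a b assume "a \<in> J" "b \<in> J"
    then have "rfrac a \<one> \<oplus>\<^bsub>RS\<^esub> rfrac b \<one> \<in> K" unfolding J_def by blast
    with \<open>a \<in> J\<close> \<open>b \<in> J\<close> show "a \<oplus> b \<in> J" unfolding J_def by (simp add: rfrac_add)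
  next
    fix a x assume "a \<in> J" "x \<in> carrier R"
    then have "rfrac x \<one> \<otimes>\<^bsub>RS\<^esub> rfrac a \<one> \<in> K" unfolding J_def by (simp add: K.I_l_closed)
    with \<open>a \<in> J\<close> \<open>x \<in> carrier R\<close> show "x \<otimes> a \<in> J" unfolding J_def by (simp add: rfrac_mult)
  qed
  then have IJ: "Idl A \<subseteq> J"
    using A AK by (intro genideal_minimal) (auto simp: J_def)
  show ?thesis
  proof
    fix x assume "x \<in> loc_ideal (Idl A)"
    then obtain b t where b: "b \<in> J" "t \<in> S" and x: "x = rfrac b t"
      unfolding loc_ideal_def using IJ by blast
    then have "rfrac \<one> t \<otimes>\<^bsub>RS\<^esub> rfrac b \<one> \<in> K" unfolding J_def by (simp add: K.I_l_closed)
    with b show "x \<in> K" unfolding x J_def by (simp add: rfrac_one_mult)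
  qed
qed

lemma genideal_loc_ring:
  assumes P: "P \<subseteq> carrier R \<times> S"
  shows "Idl\<^bsub>RS\<^esub> (case_prod rfrac ` P) = loc_ideal (Idl (fst ` P))"
proof
  have A: "fst ` P \<subseteq> carrier R" using P by auto
  show "Idl\<^bsub>RS\<^esub> (case_prod rfrac ` P) \<subseteq> loc_ideal (Idl (fst ` P))"
  proof (rule ring.genideal_minimal[OF ring_loc_ring ideal_loc_ideal[OF genideal_ideal[OF A]]])
    show "case_prod rfrac ` P \<subseteq> loc_ideal (Idl (fst ` P))"
      unfolding loc_ideal_def using P genideal_self[OF A] by force
  qed
  interpret K: ideal "Idl\<^bsub>RS\<^esub> (case_prod rfrac ` P)" RS
    using P by (intro ring.genideal_ideal[OF ring_loc_ring]) auto
  show "loc_ideal (Idl (fst ` P)) \<subseteq> Idl\<^bsub>RS\<^esub> (case_prod rfrac ` P)"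
  proof (rule loc_ideal_genideal_subset[OF K.is_ideal A])
    fix a assume "a \<in> fst ` P"
    then obtain s where as: "(a, s) \<in> P" by force
    then have "rfrac a s \<in> Idl\<^bsub>RS\<^esub> (case_prod rfrac ` P)"
      using P by (intro subsetD[OF ring.genideal_self[OF ring_loc_ring]]) auto
    then have "rfrac s \<one> \<otimes>\<^bsub>RS\<^esub> rfrac a s \<in> Idl\<^bsub>RS\<^esub> (case_prod rfrac ` P)"
      using as P by (intro K.I_l_closed) auto
    then show "rfrac a \<one> \<in> Idl\<^bsub>RS\<^esub> (case_prod rfrac ` P)"
      using as P by (auto simp: rfrac_mult_cancel)
  qed
qed

lemma fg_ideal_loc_ringE:
  assumes "fg_ideal RS J"
  obtains A where "finite A" "A \<subseteq> carrier R" "J = loc_ideal (Idl A)"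
proof -
  obtain B where B: "finite B" "B \<subseteq> carrier RS" "J = Idl\<^bsub>RS\<^esub> B"
    using assms unfolding fg_ideal_def by blast
  obtain P where P: "P \<subseteq> carrier R \<times> S" "finite P" "B = case_prod rfrac ` P"
    using finite_subset_image[OF B(1,2)[unfolded carrier_loc_ring]] by blast
  show thesis
    using P by (intro that[of "fst ` P"]) (auto simp: B(3) genideal_loc_ring)
qed

lemma fg_ideal_loc_ideal:
  assumes "finite A" "A \<subseteq> carrier R"
  shows "fg_ideal RS (loc_ideal (Idl A))"
proof -
  have "loc_ideal (Idl A) = Idl\<^bsub>RS\<^esub> (case_prod rfrac ` (A \<times> {\<one>}))"
    using assms(2) by (subst genideal_loc_ring) auto
  then show ?thesis
    unfolding fg_ideal_def using assms by (intro exI[of _ "case_prod rfrac ` (A \<times> {\<one>})"]) auto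
qed

lemma add_loc_module_loc: "Ring.ring.add MS' = Ring.ring.add MS"
  and zero_loc_module_loc: "\<zero>\<^bsub>MS'\<^esub> = \<zero>\<^bsub>MS\<^esub>"
  unfolding loc_module_def loc_module_loc_def Let_def by simp_all

lemma rfrac_smult_mfrac_eq:
  assumes "a \<in> carrier R" "t \<in> S" "m \<in> carrier M" "s \<in> S"
  shows "rfrac a t \<odot>\<^bsub>MS'\<^esub> mfrac m s = a \<odot>\<^bsub>MS\<^esub> mfrac m (t \<otimes> s)"
  using assms by (simp add: rfrac_smult_mfrac mfrac_smult)

lemma rfrac_smult_image_eq:
  assumes a: "a \<in> carrier R" and t: "t \<in> S"
  shows "(\<lambda>x. rfrac a t \<odot>\<^bsub>MS'\<^esub> x) ` carrier MS' = (\<lambda>x. a \<odot>\<^bsub>MS\<^esub> x) ` carrier MS"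
proof (intro equalityI subsetI)
  fix y assume "y \<in> (\<lambda>x. rfrac a t \<odot>\<^bsub>MS'\<^esub> x) ` carrier MS'"
  then obtain m s where "m \<in> carrier M" "s \<in> S" "y = a \<odot>\<^bsub>MS\<^esub> mfrac m (t \<otimes> s)"
    using assms by (auto simp: carrier_loc_module_loc rfrac_smult_mfrac_eq elim!: loc_module_cases)
  then show "y \<in> (\<lambda>x. a \<odot>\<^bsub>MS\<^esub> x) ` carrier MS"
    using t by simp
next
  fix y assume "y \<in> (\<lambda>x. a \<odot>\<^bsub>MS\<^esub> x) ` carrier MS"
  then obtain m s where m: "m \<in> carrier M" "s \<in> S" and y: "y = a \<odot>\<^bsub>MS\<^esub> mfrac m s"
    by (auto elim!: loc_module_cases)
  have "mfrac (a \<odot>\<^bsub>M\<^esub> m) s = mfrac (a \<odot>\<^bsub>M\<^esub> (t \<odot>\<^bsub>M\<^esub> m)) (t \<otimes> s)"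
    using a t m by (intro mfrac_eqI) (simp_all add: smult_assoc1[symmetric] m_ac)
  then have "y = rfrac a t \<odot>\<^bsub>MS'\<^esub> mfrac (t \<odot>\<^bsub>M\<^esub> m) s"
    using a t m by (simp add: y mfrac_smult rfrac_smult_mfrac)
  then show "y \<in> (\<lambda>x. rfrac a t \<odot>\<^bsub>MS'\<^esub> x) ` carrier MS'"
    using t m by (simp add: carrier_loc_module_loc)
qed

lemma rfrac_in_W_set_iff:
  assumes "a \<in> carrier R" "t \<in> S"
  shows "rfrac a t \<in> W_set RS MS' \<longleftrightarrow> a \<in> W_set R MS"
  using assms rfrac_smult_image_eq[OF assms]
  by (simp add: W_set_def carrier_loc_module_loc)

lemma loc_ideal_subset_W_set_iff:
  assumes "I \<subseteq> carrier R"
  shows "loc_ideal I \<subseteq> W_set RS MS' \<longleftrightarrow> I \<subseteq> W_set R MS"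
proof -
  have "loc_ideal I \<subseteq> W_set RS MS' \<longleftrightarrow> (\<forall>b\<in>I. \<forall>t\<in>S. rfrac b t \<in> W_set RS MS')"
    unfolding loc_ideal_def by blast
  also have "\<dots> \<longleftrightarrow> I \<subseteq> W_set R MS"
    using assms one_in_S by (auto simp: rfrac_in_W_set_iff subset_iff simp del: one_in_S)
  finally show ?thesis .
qed

lemma smult_generators_loc_ideal:
  assumes I: "I \<subseteq> carrier R"
  shows "{b \<odot>\<^bsub>MS'\<^esub> x | b x. b \<in> loc_ideal I \<and> x \<in> carrier MS'} = {a \<odot>\<^bsub>MS\<^esub> x | a x. a \<in> I \<and> x \<in> carrier MS}"
proof (intro equalityI subsetI)
  fix y assume "y \<in> {b \<odot>\<^bsub>MS'\<^esub> x | b x. b \<in> loc_ideal I \<and> x \<in> carrier MS'}"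
  then obtain a t x where a: "a \<in> I" "t \<in> S" and x: "x \<in> carrier MS" and y: "y = rfrac a t \<odot>\<^bsub>MS'\<^esub> x"
    unfolding loc_ideal_def carrier_loc_module_loc by blast
  from x obtain m s where m: "m \<in> carrier M" "s \<in> S" and "x = mfrac m s"
    by (rule loc_module_cases)
  then have "y = a \<odot>\<^bsub>MS\<^esub> mfrac m (t \<otimes> s)"
    using a I by (simp add: y rfrac_smult_mfrac_eq subset_iff)
  moreover have "mfrac m (t \<otimes> s) \<in> carrier MS" using a m by simp
  ultimately show "y \<in> {a \<odot>\<^bsub>MS\<^esub> x | a x. a \<in> I \<and> x \<in> carrier MS}"
    using a by blast
next
  fix y assume "y \<in> {a \<odot>\<^bsub>MS\<^esub> x | a x. a \<in> I \<and> x \<in> carrier MS}"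
  then obtain a x where a: "a \<in> I" and x: "x \<in> carrier MS" and y: "y = a \<odot>\<^bsub>MS\<^esub> x"
    by blast
  from x obtain m s where m: "m \<in> carrier M" "s \<in> S" and "x = mfrac m s"
    by (rule loc_module_cases)
  then have "y = rfrac a \<one> \<odot>\<^bsub>MS'\<^esub> x"
    using a I by (simp add: y rfrac_smult_mfrac_eq subset_iff)
  moreover have "rfrac a \<one> \<in> loc_ideal I"
    unfolding loc_ideal_def using a one_in_S by blast
  ultimately show "y \<in> {b \<odot>\<^bsub>MS'\<^esub> x | b x. b \<in> loc_ideal I \<and> x \<in> carrier MS'}"
    using x by (auto simp: carrier_loc_module_loc)
qed

lemma ideal_smult_loc_ideal:
  assumes "I \<subseteq> carrier R"
  shows "ideal_smult MS' (loc_ideal I) = ideal_smult MS I"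
  unfolding ideal_smult_def smult_generators_loc_ideal[OF assms]
  by (rule generate_cong) (simp_all add: carrier_loc_module_loc add_loc_module_loc zero_loc_module_loc)

lemma genideal_subset_carrier: "A \<subseteq> carrier R \<Longrightarrow> Idl A \<subseteq> carrier R"
  using genideal_ideal ideal.axioms(1) additive_subgroup.a_subset by blast

lemma dual_prop_A_loc_module_iff: "dual_prop_A RS MS' \<longleftrightarrow> dual_prop_A R MS"
proof
  assume dual: "dual_prop_A RS MS'"
  show "dual_prop_A R MS"
    unfolding dual_prop_A_def
  proof (intro allI impI, elim conjE)
    fix I assume "fg_ideal R I" "I \<subseteq> W_set R MS"
    then obtain A where A: "finite A" "A \<subseteq> carrier R" and I: "I = Idl A"
      unfolding fg_ideal_def by blast
    have "loc_ideal I \<subseteq> W_set RS MS'"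
      using \<open>I \<subseteq> W_set R MS\<close> loc_ideal_subset_W_set_iff genideal_subset_carrier A
      unfolding I by blast
    then have "ideal_smult MS' (loc_ideal I) \<noteq> carrier MS'"
      using dual fg_ideal_loc_ideal[OF A] unfolding dual_prop_A_def I by blast
    then show "ideal_smult MS I \<noteq> carrier MS"
      by (simp add: I ideal_smult_loc_ideal genideal_subset_carrier A carrier_loc_module_loc)
  qed
next
  assume dual: "dual_prop_A R MS"
  show "dual_prop_A RS MS'"
    unfolding dual_prop_A_def
  proof (intro allI impI, elim conjE)
    fix J assume "fg_ideal RS J" "J \<subseteq> W_set RS MS'"
    from \<open>fg_ideal RS J\<close> obtain A where A: "finite A" "A \<subseteq> carrier R" and J: "J = loc_ideal (Idl A)"
      by (rule fg_ideal_loc_ringE)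
    have "Idl A \<subseteq> W_set R MS"
      using \<open>J \<subseteq> W_set RS MS'\<close> loc_ideal_subset_W_set_iff genideal_subset_carrier A
      unfolding J by blast
    then have "ideal_smult MS (Idl A) \<noteq> carrier MS"
      using dual A unfolding dual_prop_A_def fg_ideal_def by blast
    then show "ideal_smult MS' J \<noteq> carrier MS'"
      by (simp add: J ideal_smult_loc_ideal genideal_subset_carrier A carrier_loc_module_loc)
  qed
qed

lemma S_smult_surj:
  assumes "S \<inter> W_set R M = {}" "s \<in> S" "m \<in> carrier M"
  obtains m' where "m' \<in> carrier M" "s \<odot>\<^bsub>M\<^esub> m' = m"
proof -
  have "s \<notin> W_set R M" using assms(1,2) by blast
  then have "m \<in> (\<lambda>x. s \<odot>\<^bsub>M\<^esub> x) ` carrier M"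
    using assms(2,3) by (simp add: W_set_def)
  then show thesis using that by blast
qed

lemma S_smult_inj:
  assumes "S \<inter> Z_set R M = {}" "s \<in> S" "m \<in> carrier M" "s \<odot>\<^bsub>M\<^esub> m = \<zero>\<^bsub>M\<^esub>"
  shows "m = \<zero>\<^bsub>M\<^esub>"
proof (rule ccontr)
  assume "m \<noteq> \<zero>\<^bsub>M\<^esub>"
  then have "s \<in> Z_set R M" using assms(2-4) unfolding Z_set_def by auto
  then show False using assms(1,2) by blast
qed

lemma bij_mfrac_one:
  assumes W: "S \<inter> W_set R M = {}" and Z: "S \<inter> Z_set R M = {}"
  shows "bij_betw (\<lambda>m. mfrac m \<one>) (carrier M) (carrier MS)"
proof (rule bij_betw_imageI)
  show "inj_on (\<lambda>m. mfrac m \<one>) (carrier M)"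
  proof (rule inj_onI)
    fix m m' assume m: "m \<in> carrier M" "m' \<in> carrier M" and "mfrac m \<one> = mfrac m' \<one>"
    then obtain u where u: "u \<in> S" "(u \<otimes> \<one>) \<odot>\<^bsub>M\<^esub> m = (u \<otimes> \<one>) \<odot>\<^bsub>M\<^esub> m'"
      unfolding mfrac_eq_iff[OF m(1) one_in_S m(2) one_in_S] loc_rel_iff by blast
    then have "u \<odot>\<^bsub>M\<^esub> (m \<ominus>\<^bsub>M\<^esub> m') = \<zero>\<^bsub>M\<^esub>"
      using m by (simp add: M.minus_eq smult_r_distr smult_r_minus M.r_neg)
    then have "m \<ominus>\<^bsub>M\<^esub> m' = \<zero>\<^bsub>M\<^esub>"
      by (rule S_smult_inj[OF Z u(1) M.minus_closed[OF m]])
    then show "m = m'" using m by (simp add: M.minus_eq_zero_iff)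
  qed
  show "(\<lambda>m. mfrac m \<one>) ` carrier M = carrier MS"
  proof (intro equalityI subsetI)
    fix x assume "x \<in> (\<lambda>m. mfrac m \<one>) ` carrier M"
    then show "x \<in> carrier MS" by auto
  next
    fix x assume "x \<in> carrier MS"
    then obtain m s where m: "m \<in> carrier M" "s \<in> S" and x: "x = mfrac m s"
      by (rule loc_module_cases)
    obtain m' where m': "m' \<in> carrier M" "s \<odot>\<^bsub>M\<^esub> m' = m"
      using S_smult_surj[OF W m(2,1)] .
    have "x = mfrac m' \<one>"
      unfolding x using m m' by (intro mfrac_eqI) auto
    then show "x \<in> (\<lambda>m. mfrac m \<one>) ` carrier M" using m' by blast
  qed
qed

lemma dual_prop_A_loc_module_iff_module:
  assumes "S \<inter> W_set R M = {}" "S \<inter> Z_set R M = {}"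
  shows "dual_prop_A R MS \<longleftrightarrow> dual_prop_A R M"
proof -
  interpret linear_bijection R M MS "\<lambda>m. mfrac m \<one>"
    using bij_mfrac_one[OF assms]
    by unfold_locales (simp_all add: mfrac_add mfrac_smult zero_loc_module)
  show ?thesis by (rule dual_prop_A_iff)
qed

end

theorem corollary2p10:
  fixes R :: "('a, 'c) ring_scheme" and M :: "('a, 'b, 'd) module_scheme" and S :: "'a set"
  assumes "module R M"
    and "mult_closed R S"
  shows "(dual_prop_A R (loc_module R M S) \<longleftrightarrow> dual_prop_A (loc_ring R S) (loc_module_loc R M S))
    \<and> (S \<inter> W_set R M = {} \<and> S \<inter> Z_set R M = {} \<longrightarrow>
         ((dual_prop_A R (loc_module R M S) \<longleftrightarrow> dual_prop_A (loc_ring R S) (loc_module_loc R M S))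
          \<and> (dual_prop_A (loc_ring R S) (loc_module_loc R M S) \<longleftrightarrow> dual_prop_A R M)))"
proof -
  interpret localization R M S
    using assms by (rule localization.intro[OF _ localization_axioms.intro])
  show ?thesis
    using dual_prop_A_loc_module_iff dual_prop_A_loc_module_iff_module by simp
qed

end
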